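(* Let $P=\{p_1=(121,204),\ p_2=(175,196),\ p_3=(216,82),\ p_4=(189,51),\ p_5=(44,96),\ p_6=(36,140),\ p_7=(127,135)\}$. Then $P$ is in general position and $\mu(D(P))=\binom{7}{2}-9=12$.
   Context: A set of points in the plane is in general position if no three of its points are collinear. The disjointness graph of segments $D(P)$ is the graph whose vertices are all closed straight-line segments with both endpoints in $P$, two being adjacent if and only if they are disjoint. For a graph $G$ and $U\subseteq V(G)$, two distinct vertices $x,y\in U$ are $U$-mutually visible if $G$ contains a shortest $x$-$y$ path none of whose internal vertices lies in $U$; $U$ is a mutual-visibility set if every two distinct vertices of $U$ are $U$-mutually visible. The mutual-visibility number $\mu(G)$ is the maximum size of a mutual-visibility set of $G$. *)

theory Defs
  imports "HOL-Analysis.Analysis"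
begin

type_synonym pt = "real \<times> real"

definition general_position :: "pt set \<Rightarrow> bool" where
  "general_position P \<longleftrightarrow>
     (\<forall>a\<in>P. \<forall>b\<in>P. \<forall>c\<in>P. a \<noteq> b \<and> a \<noteq> c \<and> b \<noteq> c \<longrightarrow> \<not> collinear {a, b, c})"

definition seg_vertices :: "pt set \<Rightarrow> pt set set" where
  "seg_vertices P = {closed_segment a b | a b. a \<in> P \<and> b \<in> P \<and> a \<noteq> b}"

definition seg_adj :: "pt set \<Rightarrow> pt set \<Rightarrow> bool" where
  "seg_adj S T \<longleftrightarrow> S \<inter> T = {}"

text \<open>A walk is a nonempty list of vertices with consecutive entries adjacent;
  its length is the number of edges, i.e. length xs - 1.\<close>
definition walk :: "'v set \<Rightarrow> ('v \<Rightarrow> 'v \<Rightarrow> bool) \<Rightarrow> 'v list \<Rightarrow> bool" where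
  "walk V E xs \<longleftrightarrow> xs \<noteq> [] \<and> set xs \<subseteq> V \<and>
     (\<forall>i. Suc i < length xs \<longrightarrow> E (xs ! i) (xs ! Suc i))"

definition gdist :: "'v set \<Rightarrow> ('v \<Rightarrow> 'v \<Rightarrow> bool) \<Rightarrow> 'v \<Rightarrow> 'v \<Rightarrow> nat" where
  "gdist V E x y = (LEAST n. \<exists>xs. walk V E xs \<and> hd xs = x \<and> last xs = y \<and> length xs = Suc n)"

definition shortest_path :: "'v set \<Rightarrow> ('v \<Rightarrow> 'v \<Rightarrow> bool) \<Rightarrow> 'v \<Rightarrow> 'v \<Rightarrow> 'v list \<Rightarrow> bool" where
  "shortest_path V E x y xs \<longleftrightarrow> walk V E xs \<and> distinct xs \<and> hd xs = x \<and> last xs = y \<and>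
     length xs = Suc (gdist V E x y)"

definition mutually_visible :: "'v set \<Rightarrow> ('v \<Rightarrow> 'v \<Rightarrow> bool) \<Rightarrow> 'v set \<Rightarrow> 'v \<Rightarrow> 'v \<Rightarrow> bool" where
  "mutually_visible V E U x y \<longleftrightarrow>
     (\<exists>xs. shortest_path V E x y xs \<and> set (butlast (tl xs)) \<inter> U = {})"

definition mv_set :: "'v set \<Rightarrow> ('v \<Rightarrow> 'v \<Rightarrow> bool) \<Rightarrow> 'v set \<Rightarrow> bool" where
  "mv_set V E U \<longleftrightarrow> U \<subseteq> V \<and>
     (\<forall>x\<in>U. \<forall>y\<in>U. x \<noteq> y \<longrightarrow> mutually_visible V E U x y)"

definition mu :: "'v set \<Rightarrow> ('v \<Rightarrow> 'v \<Rightarrow> bool) \<Rightarrow> nat" where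
  "mu V E = Max {card U | U. mv_set V E U}"

end

theory Submission
  imports Defs
begin

text \<open>Since the points have integer coordinates and no three are collinear, two segments are disjoint
  iff they have no common endpoint and the endpoints of one lie strictly on one side of the line
  through the other. So \<open>D(P)\<close> is isomorphic to a graph on the 21 pairs of point indices that is
  decided by integer orientation tests, and \<open>\<mu>\<close> is invariant under isomorphism.

  Lower bound: the 12 segments not incident to \<open>p\<^sub>1\<close>, except \<open>p\<^sub>2p\<^sub>5\<close>, \<open>p\<^sub>2p\<^sub>6\<close> and
  \<open>p\<^sub>2p\<^sub>7\<close>, pairwise are adjacent or have a common neighbour outside this set.

  Upper bound: if \<open>u, v \<in> U\<close> are at distance two in a mutual-visibility set \<open>U\<close>, then a common
  neighbour of \<open>u\<close> and \<open>v\<close> lies outside \<open>U\<close>; hence the complement of \<open>U\<close> meets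
  \<open>{u, v} \<union> (N(u) \<inter> N(v))\<close> for every pair \<open>u, v\<close> at distance two. A branch-and-bound search shows
  that 48 of these sets admit no hitting set of size 8, so \<open>|U| \<le> 21 - 9\<close>.\<close>

section \<open>Mutual visibility at distance one and two\<close>

lemma walk_Nil [simp]: "\<not> walk V E []"
  by (simp add: walk_def)

lemma walk_singleton [simp]: "walk V E [x] \<longleftrightarrow> x \<in> V"
  by (simp add: walk_def)

lemma walk_Cons_Cons [simp]: "walk V E (x # y # xs) \<longleftrightarrow> x \<in> V \<and> E x y \<and> walk V E (y # xs)"
  unfolding walk_def by (auto simp: less_Suc_eq_0_disj)

lemma walk_length_ge_2:
  assumes "walk V E xs" "hd xs \<noteq> last xs"
  shows "2 \<le> length xs"
  using assms by (cases xs rule: remdups_adj.cases) (auto split: if_splits)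

lemma walk_length_ge_3:
  assumes "walk V E xs" "hd xs \<noteq> last xs" "\<not> E (hd xs) (last xs)"
  shows "3 \<le> length xs"
  using assms by (cases xs rule: remdups_adj.cases) (auto split: if_splits simp: Suc_le_eq)

lemma gdist_eqI:
  assumes "walk V E xs" "hd xs = x" "last xs = y" "length xs = Suc n"
    and "\<And>ys. walk V E ys \<Longrightarrow> hd ys = x \<Longrightarrow> last ys = y \<Longrightarrow> Suc n \<le> length ys"
  shows "gdist V E x y = n"
  unfolding gdist_def
proof (rule Least_equality)
  show "\<exists>xs. walk V E xs \<and> hd xs = x \<and> last xs = y \<and> length xs = Suc n"
    using assms(1-4) by blast
next
  fix m assume "\<exists>ys. walk V E ys \<and> hd ys = x \<and> last ys = y \<and> length ys = Suc m"
  then show "n \<le> m" using assms(5) by fastforce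
qed

lemma shortest_path_edge:
  assumes "x \<in> V" "y \<in> V" "E x y" "x \<noteq> y"
  shows "shortest_path V E x y [x, y]"
proof -
  have "gdist V E x y = 1"
  proof (rule gdist_eqI[of V E "[x, y]"])
    show "Suc 1 \<le> length ys" if "walk V E ys" "hd ys = x" "last ys = y" for ys
      using walk_length_ge_2[of V E ys] that assms(4) by simp
  qed (use assms in auto)
  then show ?thesis using assms by (simp add: shortest_path_def)
qed

lemma shortest_path_two_steps:
  assumes "x \<in> V" "y \<in> V" "z \<in> V" "E x z" "E z y" "\<not> E x y" "x \<noteq> y"
  shows "shortest_path V E x y [x, z, y]"
proof -
  have "gdist V E x y = 2"
  proof (rule gdist_eqI[of V E "[x, z, y]"])
    show "Suc 2 \<le> length ys" if "walk V E ys" "hd ys = x" "last ys = y" for ys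
      using walk_length_ge_3[of V E ys] that assms(6,7) by simp
  qed (use assms in auto)
  moreover have "x \<noteq> z" "z \<noteq> y" using assms(4-6) by auto
  ultimately show ?thesis using assms by (simp add: shortest_path_def)
qed

lemma mutually_visible_if_adjacent:
  assumes "x \<in> V" "y \<in> V" "E x y" "x \<noteq> y"
  shows "mutually_visible V E U x y"
  unfolding mutually_visible_def
  by (intro exI[of _ "[x, y]"]) (simp add: shortest_path_edge assms)

lemma mutually_visible_via_common_neighbour:
  assumes "x \<in> V" "y \<in> V" "z \<in> V" "E x z" "E z y" "\<not> E x y" "x \<noteq> y" "z \<notin> U"
  shows "mutually_visible V E U x y"
  unfolding mutually_visible_def
  by (intro exI[of _ "[x, z, y]"]) (simp add: shortest_path_two_steps assms)

lemma common_neighbour_outside_if_mutually_visible: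
  assumes "mutually_visible V E U x y"
    and "x \<in> V" "y \<in> V" "z \<in> V" "E x z" "E z y" "\<not> E x y" "x \<noteq> y"
  shows "\<exists>w\<in>V - U. E x w \<and> E w y"
proof -
  obtain xs where xs: "shortest_path V E x y xs" and avoids: "set (butlast (tl xs)) \<inter> U = {}"
    using assms(1) unfolding mutually_visible_def by blast
  have "length xs = 3"
    using xs shortest_path_two_steps[OF assms(2-8)] by (simp add: shortest_path_def)
  then obtain a w b where "xs = [a, w, b]"
    by (auto simp: length_Suc_conv numeral_3_eq_3)
  with xs have "xs = [x, w, y]" by (simp add: shortest_path_def)
  with xs avoids have "w \<in> V - U" "E x w" "E w y" by (simp_all add: shortest_path_def)
  then show ?thesis by blast
qed

lemma mv_set_if_adjacent_or_common_neighbour: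
  assumes "U \<subseteq> V" "\<forall>x\<in>U. \<forall>y\<in>U. x \<noteq> y \<longrightarrow> E x y \<or> (\<exists>w\<in>V. w \<notin> U \<and> E x w \<and> E w y)"
  shows "mv_set V E U"
  unfolding mv_set_def
proof (intro conjI ballI impI)
  show "U \<subseteq> V" by (fact assms(1))
  fix x y assume xy: "x \<in> U" "y \<in> U" "x \<noteq> y"
  then have V: "x \<in> V" "y \<in> V" using assms(1) by auto
  show "mutually_visible V E U x y"
  proof (cases "E x y")
    case True
    then show ?thesis by (rule mutually_visible_if_adjacent[OF V _ xy(3)])
  next
    case False
    then obtain w where "w \<in> V" "w \<notin> U" "E x w" "E w y" using assms(2) xy by blast
    then show ?thesis using mutually_visible_via_common_neighbour[OF V] False xy(3) by blast
  qed
qed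

lemma mu_eqI:
  assumes "finite V" "mv_set V E U" "card U = k" "\<And>U'. mv_set V E U' \<Longrightarrow> card U' \<le> k"
  shows "mu V E = k"
  unfolding mu_def
proof (rule Max_eqI)
  have "{card U |U. mv_set V E U} \<subseteq> card ` Pow V" by (auto simp: mv_set_def)
  then show "finite {card U |U. mv_set V E U}"
    using assms(1) by (meson finite_Pow_iff finite_imageI finite_subset)
  show "k \<in> {card U |U. mv_set V E U}" using assms(2,3) by blast
  show "k' \<le> k" if "k' \<in> {card U |U. mv_set V E U}" for k'
    using that assms(4) by blast
qed

section \<open>Invariance under graph isomorphism\<close>

context
  fixes f :: "'a \<Rightarrow> 'b" and V :: "'a set" and E :: "'a \<Rightarrow> 'a \<Rightarrow> bool" and E' :: "'b \<Rightarrow> 'b \<Rightarrow> bool"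
  assumes inj: "inj_on f V" and adj: "\<forall>x\<in>V. \<forall>y\<in>V. E' (f x) (f y) \<longleftrightarrow> E x y"
begin

lemma walk_map_iff:
  assumes "set xs \<subseteq> V"
  shows "walk (f ` V) E' (map f xs) \<longleftrightarrow> walk V E xs"
  using assms by (induction xs rule: remdups_adj.induct) (auto simp: adj)

lemma walk_image_from_to_iff:
  assumes "set xs \<subseteq> V" "x \<in> V" "y \<in> V"
  shows "walk (f ` V) E' (map f xs) \<and> hd (map f xs) = f x \<and> last (map f xs) = f y \<longleftrightarrow>
         walk V E xs \<and> hd xs = x \<and> last xs = y"
proof (cases "xs = []")
  case False
  then have "hd xs \<in> V" "last xs \<in> V" using assms(1) by auto
  then show ?thesis
    using False assms walk_map_iff[OF assms(1)] inj_on_eq_iff[OF inj]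
    by (auto simp: hd_map last_map)
qed simp

lemma gdist_image:
  assumes "x \<in> V" "y \<in> V"
  shows "gdist (f ` V) E' (f x) (f y) = gdist V E x y"
proof -
  have "(\<exists>ys. walk (f ` V) E' ys \<and> hd ys = f x \<and> last ys = f y \<and> length ys = Suc n) \<longleftrightarrow>
        (\<exists>xs. walk V E xs \<and> hd xs = x \<and> last xs = y \<and> length xs = Suc n)" for n
  proof
    assume "\<exists>ys. walk (f ` V) E' ys \<and> hd ys = f x \<and> last ys = f y \<and> length ys = Suc n"
    then obtain ys where ys: "walk (f ` V) E' ys" "hd ys = f x" "last ys = f y" "length ys = Suc n"
      by blast
    then have "ys \<in> lists (f ` V)" by (auto simp: walk_def)
    then obtain xs where xs: "set xs \<subseteq> V" "ys = map f xs" by (auto simp: lists_image)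
    then have "walk V E xs \<and> hd xs = x \<and> last xs = y"
      using ys walk_image_from_to_iff[OF xs(1) assms] by simp
    then show "\<exists>xs. walk V E xs \<and> hd xs = x \<and> last xs = y \<and> length xs = Suc n"
      using ys(4) xs(2) by auto
  next
    assume "\<exists>xs. walk V E xs \<and> hd xs = x \<and> last xs = y \<and> length xs = Suc n"
    then obtain xs where xs: "walk V E xs" "hd xs = x" "last xs = y" "length xs = Suc n"
      by blast
    then have "set xs \<subseteq> V" by (simp add: walk_def)
    then have "walk (f ` V) E' (map f xs) \<and> hd (map f xs) = f x \<and> last (map f xs) = f y"
      using xs walk_image_from_to_iff assms by blast
    then show "\<exists>ys. walk (f ` V) E' ys \<and> hd ys = f x \<and> last ys = f y \<and> length ys = Suc n"
      using xs(4) by (intro exI[of _ "map f xs"]) simp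
  qed
  then show ?thesis unfolding gdist_def by simp
qed

lemma shortest_path_image_iff:
  assumes "set xs \<subseteq> V" "x \<in> V" "y \<in> V"
  shows "shortest_path (f ` V) E' (f x) (f y) (map f xs) \<longleftrightarrow> shortest_path V E x y xs"
  using walk_image_from_to_iff[OF assms] gdist_image[OF assms(2,3)]
    distinct_map[of f xs] inj_on_subset[OF inj assms(1)]
  unfolding shortest_path_def by auto

lemma mutually_visible_image_iff:
  assumes "U \<subseteq> V" "x \<in> V" "y \<in> V"
  shows "mutually_visible (f ` V) E' (f ` U) (f x) (f y) \<longleftrightarrow> mutually_visible V E U x y"
proof -
  have avoid: "set (butlast (tl (map f xs))) \<inter> f ` U = {} \<longleftrightarrow> set (butlast (tl xs)) \<inter> U = {}"
    if "set xs \<subseteq> V" for xs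
  proof -
    have "set (butlast (tl xs)) \<subseteq> V"
      using that by (cases xs) (auto dest: in_set_butlastD)
    then have "f ` set (butlast (tl xs)) \<inter> f ` U = f ` (set (butlast (tl xs)) \<inter> U)"
      using inj_on_image_Int[OF inj _ assms(1)] by blast
    then show ?thesis by (simp add: map_butlast[symmetric] map_tl[symmetric])
  qed
  show ?thesis
  proof
    assume "mutually_visible (f ` V) E' (f ` U) (f x) (f y)"
    then obtain ys where ys: "shortest_path (f ` V) E' (f x) (f y) ys"
      and avoids: "set (butlast (tl ys)) \<inter> f ` U = {}"
      unfolding mutually_visible_def by blast
    then have "ys \<in> lists (f ` V)" by (auto simp: shortest_path_def walk_def)
    then obtain xs where xs: "set xs \<subseteq> V" "ys = map f xs" by (auto simp: lists_image)
    have "shortest_path V E x y xs"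
      using ys shortest_path_image_iff[OF xs(1) assms(2,3)] xs(2) by simp
    moreover have "set (butlast (tl xs)) \<inter> U = {}"
      using avoids avoid[OF xs(1)] xs(2) by simp
    ultimately show "mutually_visible V E U x y"
      unfolding mutually_visible_def by blast
  next
    assume "mutually_visible V E U x y"
    then obtain xs where xs: "shortest_path V E x y xs" and avoids: "set (butlast (tl xs)) \<inter> U = {}"
      unfolding mutually_visible_def by blast
    then have V: "set xs \<subseteq> V" by (simp add: shortest_path_def walk_def)
    have "shortest_path (f ` V) E' (f x) (f y) (map f xs)"
      using xs shortest_path_image_iff[OF V assms(2,3)] by simp
    moreover have "set (butlast (tl (map f xs))) \<inter> f ` U = {}"
      using avoids avoid[OF V] by simp
    ultimately show "mutually_visible (f ` V) E' (f ` U) (f x) (f y)"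
      unfolding mutually_visible_def by blast
  qed
qed

lemma mv_set_image_iff:
  assumes "U \<subseteq> V"
  shows "mv_set (f ` V) E' (f ` U) \<longleftrightarrow> mv_set V E U"
proof -
  have "(\<forall>x'\<in>f ` U. \<forall>y'\<in>f ` U. x' \<noteq> y' \<longrightarrow> mutually_visible (f ` V) E' (f ` U) x' y') \<longleftrightarrow>
        (\<forall>x\<in>U. \<forall>y\<in>U. x \<noteq> y \<longrightarrow> mutually_visible V E U x y)"
    using assms inj mutually_visible_image_iff[OF assms]
    by (auto simp: inj_on_eq_iff[OF inj] subset_iff)
  then show ?thesis
    using assms inj by (auto simp: mv_set_def inj_on_image_mem_iff)
qed

lemma mu_image: "mu (f ` V) E' = mu V E"
proof -
  have "{card U' |U'. mv_set (f ` V) E' U'} = {card U |U. mv_set V E U}"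
  proof (intro equalityI subsetI)
    fix k assume "k \<in> {card U' |U'. mv_set (f ` V) E' U'}"
    then obtain U' where U': "mv_set (f ` V) E' U'" "k = card U'" by blast
    define U where "U = V \<inter> f -` U'"
    have "U \<subseteq> V" "U' = f ` U" using U'(1) by (auto simp: U_def mv_set_def)
    then have "mv_set V E U" "card U' = card U"
      using U'(1) mv_set_image_iff card_image[OF inj_on_subset[OF inj]] by auto
    then show "k \<in> {card U |U. mv_set V E U}" using U'(2) by blast
  next
    fix k assume "k \<in> {card U |U. mv_set V E U}"
    then obtain U where U: "mv_set V E U" "k = card U" by blast
    then have "U \<subseteq> V" by (simp add: mv_set_def)
    then have "mv_set (f ` V) E' (f ` U)" "card (f ` U) = card U"
      using U(1) mv_set_image_iff card_image[OF inj_on_subset[OF inj]] by auto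
    then show "k \<in> {card U' |U'. mv_set (f ` V) E' U'}" using U(2) by force
  qed
  then show ?thesis by (simp add: mu_def)
qed

end

section \<open>Hitting sets of visibility constraints\<close>

fun greedy_packing :: "'a list \<Rightarrow> 'a list list \<Rightarrow> nat" where
  "greedy_packing used [] = 0"
| "greedy_packing used (m # ms) =
     (if list_all (\<lambda>x. x \<notin> set used) m then Suc (greedy_packing (m @ used) ms)
      else greedy_packing used ms)"

text \<open>A hitting set of size at most \<open>k\<close> makes \<open>hittable n k ms\<close> true, also when the fuel \<open>n\<close>
  runs out, so the value \<open>False\<close> certifies that every hitting set has more than \<open>k\<close> elements.\<close>
fun hittable :: "nat \<Rightarrow> nat \<Rightarrow> 'a list list \<Rightarrow> bool" where
  "hittable 0 k ms = True"
| "hittable (Suc n) k ms =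
     (if [] \<in> set ms then False
      else if ms = [] then True
      else if k < greedy_packing [] ms then False
      else let v = hd (hd ms) in
        hittable n (k - 1) (filter (\<lambda>m. v \<notin> set m) ms) \<or> hittable n k (map (removeAll v) ms))"

lemma greedy_packing_le_card:
  assumes "finite W" "\<forall>m\<in>set ms. set m \<inter> W \<noteq> {}"
  shows "greedy_packing used ms \<le> card (W - set used)"
  using assms(2)
proof (induction ms arbitrary: used)
  case Nil
  then show ?case by simp
next
  case (Cons m ms)
  show ?case
  proof (cases "list_all (\<lambda>x. x \<notin> set used) m")
    case True
    then have fresh: "set m \<inter> set used = {}" by (auto simp: list_all_iff)
    obtain w where w: "w \<in> set m" "w \<in> W" using Cons.prems by auto
    with fresh have "w \<in> W - set used" by auto
    have "greedy_packing (m @ used) ms \<le> card (W - set (m @ used))"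
      using Cons.IH[of "m @ used"] Cons.prems by simp
    also have "\<dots> \<le> card (W - set used - {w})"
      using assms(1) w by (intro card_mono) auto
    also have "\<dots> < card (W - set used)"
      using assms(1) \<open>w \<in> W - set used\<close> by (intro card_Diff1_less) auto
    finally show ?thesis using True by simp
  next
    case False
    then show ?thesis using Cons by simp
  qed
qed

lemma hittable_if_hitting_set:
  assumes "finite W" "\<forall>m\<in>set ms. set m \<inter> W \<noteq> {}" "card W \<le> k"
  shows "hittable n k ms"
  using assms
proof (induction n arbitrary: k ms W)
  case 0
  then show ?case by simp
next
  case (Suc n)
  show ?case
  proof (cases "ms = []")
    case False
    define v where "v = hd (hd ms)"
    have "[] \<notin> set ms" using Suc.prems(2) by auto
    moreover have "\<not> k < greedy_packing [] ms"
      using greedy_packing_le_card[OF Suc.prems(1,2), of "[]"] Suc.prems(3) by simp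
    moreover have "hittable n (k - 1) (filter (\<lambda>m. v \<notin> set m) ms) \<or> hittable n k (map (removeAll v) ms)"
    proof (cases "v \<in> W")
      case True
      then have "hittable n (k - 1) (filter (\<lambda>m. v \<notin> set m) ms)"
        using Suc.prems by (intro Suc.IH[of "W - {v}"]) auto
      then show ?thesis by simp
    next
      case False
      then have "hittable n k (map (removeAll v) ms)"
        using Suc.prems by (intro Suc.IH[of W]) auto
      then show ?thesis by simp
    qed
    ultimately show ?thesis using False by (simp add: v_def Let_def)
  qed simp
qed

fun visibility_constraint :: "'a list \<Rightarrow> ('a \<Rightarrow> 'a \<Rightarrow> bool) \<Rightarrow> 'a list \<Rightarrow> bool" where
  "visibility_constraint vs E (x # y # ws) \<longleftrightarrow>
     x \<in> set vs \<and> y \<in> set vs \<and> x \<noteq> y \<and> \<not> E x y \<and> (\<exists>w\<in>set vs. E x w \<and> E w y) \<and>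
     (\<forall>w\<in>set vs. E x w \<and> E w y \<longrightarrow> w \<in> set ws)"
| "visibility_constraint vs E _ \<longleftrightarrow> False"

lemma visibility_constraint_meets_complement:
  assumes "mv_set (set vs) E U" "visibility_constraint vs E m"
  shows "set m \<inter> (set vs - U) \<noteq> {}"
proof -
  obtain x y ws where m: "m = x # y # ws"
    using assms(2) by (cases m rule: remdups_adj.cases) auto
  show ?thesis
  proof (cases "x \<in> U \<and> y \<in> U")
    case True
    then have "mutually_visible (set vs) E U x y"
      using assms m by (auto simp: mv_set_def)
    then obtain w where "w \<in> set vs - U" "E x w" "E w y"
      using common_neighbour_outside_if_mutually_visible assms(2) m by fastforce
    then show ?thesis using assms(2) m by auto
  next
    case False
    then show ?thesis using assms(2) m by auto
  qed
qed

lemma card_mv_set_bound: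
  assumes "mv_set (set vs) E U" "list_all (visibility_constraint vs E) ms" "\<not> hittable n k ms"
  shows "card U + k < length vs"
proof -
  have "\<forall>m\<in>set ms. set m \<inter> (set vs - U) \<noteq> {}"
    using assms(2) visibility_constraint_meets_complement[OF assms(1)] by (simp add: list_all_iff)
  then have "k < card (set vs - U)"
    using hittable_if_hitting_set[of "set vs - U" ms k n] assms(3) by fastforce
  moreover have "U \<subseteq> set vs" using assms(1) by (simp add: mv_set_def)
  ultimately show ?thesis
    using card_Diff_subset[of U "set vs"] card_mono[of "set vs" U] card_length[of vs]
    by (simp add: finite_subset)
qed

section \<open>Segments with endpoints in general position\<close>

definition orient :: "'a::comm_ring \<times> 'a \<Rightarrow> 'a \<times> 'a \<Rightarrow> 'a \<times> 'a \<Rightarrow> 'a" where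
  "orient a b c = (fst b - fst a) * (snd c - snd a) - (snd b - snd a) * (fst c - fst a)"

lemma orient_eq_0_if_collinear:
  fixes a b c :: "real \<times> real"
  assumes "collinear {a, b, c}"
  shows "orient a b c = 0"
proof -
  obtain u where u: "\<forall>x\<in>{a, b, c}. \<forall>y\<in>{a, b, c}. \<exists>k. x - y = k *\<^sub>R u"
    using assms unfolding collinear_def by blast
  obtain s where s: "b - a = s *\<^sub>R u" using u by blast
  obtain t where t: "c - a = t *\<^sub>R u" using u by blast
  have "fst b - fst a = s * fst u" "snd b - snd a = s * snd u"
    using arg_cong[OF s, of fst] arg_cong[OF s, of snd] by simp_all
  moreover have "fst c - fst a = t * fst u" "snd c - snd a = t * snd u"
    using arg_cong[OF t, of fst] arg_cong[OF t, of snd] by simp_all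
  ultimately show ?thesis by (simp add: orient_def)
qed

lemma orient_convex_combination:
  fixes a b x y :: "real \<times> real"
  shows "orient a b ((1 - t) *\<^sub>R x + t *\<^sub>R y) = (1 - t) * orient a b x + t * orient a b y"
  by (simp add: orient_def algebra_simps)

lemma orient_eq_0_on_closed_segment:
  fixes a b p :: "real \<times> real"
  assumes "p \<in> closed_segment a b"
  shows "orient a b p = 0"
proof -
  obtain t where "p = (1 - t) *\<^sub>R a + t *\<^sub>R b"
    using assms by (auto simp: in_segment)
  then show ?thesis by (simp add: orient_convex_combination) (simp add: orient_def algebra_simps)
qed

lemma closed_segments_disjoint_if_same_side:
  fixes a b c d :: "real \<times> real"
  assumes "0 < orient a b c * orient a b d"
  shows "closed_segment a b \<inter> closed_segment c d = {}"
proof -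
  have "orient a b p \<noteq> 0" if p: "p \<in> closed_segment c d" for p
  proof -
    obtain t where t: "0 \<le> t" "t \<le> 1" and p_eq: "p = (1 - t) *\<^sub>R c + t *\<^sub>R d"
      using p by (auto simp: in_segment)
    have "orient a b p = (1 - t) * orient a b c + t * orient a b d"
      unfolding p_eq by (rule orient_convex_combination)
    moreover have "(1 - t) * orient a b c + t * orient a b d \<noteq> 0"
    proof (cases "orient a b c < 0")
      case True
      then have "orient a b d < 0" using assms by (simp add: zero_less_mult_iff)
      then show ?thesis using True t convex_bound_lt[of "orient a b c" 0 "orient a b d" "1 - t" t] by simp
    next
      case False
      then have "0 < orient a b c" "0 < orient a b d" using assms by (auto simp: zero_less_mult_iff)
      then show ?thesis using t convex_bound_lt[of "- orient a b c" 0 "- orient a b d" "1 - t" t] by simp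
    qed
    ultimately show ?thesis by simp
  qed
  then show ?thesis using orient_eq_0_on_closed_segment by blast
qed

lemma closed_segments_meet_if_crossing:
  fixes a b c d :: "real \<times> real"
  assumes ab: "orient a b c * orient a b d < 0" and cd: "orient c d a * orient c d b < 0"
  shows "closed_segment a b \<inter> closed_segment c d \<noteq> {}"
proof -
  define t where "t = orient c d a / (orient c d a - orient c d b)"
  define s where "s = orient a b c / (orient a b c - orient a b d)"
  have t: "0 \<le> t" "t \<le> 1" and s: "0 \<le> s" "s \<le> 1"
    using ab cd unfolding t_def s_def mult_less_0_iff by (auto simp: divide_simps)
  have "orient c d a - orient c d b \<noteq> 0" "orient a b c - orient a b d \<noteq> 0"
    using ab cd mult_less_0_iff by fastforce+
  then have "(1 - t) *\<^sub>R a + t *\<^sub>R b = (1 - s) *\<^sub>R c + s *\<^sub>R d"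
    unfolding t_def s_def orient_def prod_eq_iff by (simp add: field_simps)
  then have "(1 - t) *\<^sub>R a + t *\<^sub>R b \<in> closed_segment a b \<inter> closed_segment c d"
    using s t by (auto simp: in_segment)
  then show ?thesis by blast
qed

lemma closed_segments_disjoint_iff:
  fixes a b c d :: "real \<times> real"
  assumes "orient a b c \<noteq> 0" "orient a b d \<noteq> 0" "orient c d a \<noteq> 0" "orient c d b \<noteq> 0"
  shows "closed_segment a b \<inter> closed_segment c d = {} \<longleftrightarrow>
         0 < orient a b c * orient a b d \<or> 0 < orient c d a * orient c d b"
proof
  assume disjoint: "closed_segment a b \<inter> closed_segment c d = {}"
  show "0 < orient a b c * orient a b d \<or> 0 < orient c d a * orient c d b"
  proof (rule ccontr)
    assume "\<not> ?thesis"
    moreover have "orient a b c * orient a b d \<noteq> 0" "orient c d a * orient c d b \<noteq> 0"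
      using assms by simp_all
    ultimately have "orient a b c * orient a b d < 0" "orient c d a * orient c d b < 0"
      by linarith+
    then show False using closed_segments_meet_if_crossing disjoint by blast
  qed
next
  assume "0 < orient a b c * orient a b d \<or> 0 < orient c d a * orient c d b"
  then show "closed_segment a b \<inter> closed_segment c d = {}"
    using closed_segments_disjoint_if_same_side[of a b c d] closed_segments_disjoint_if_same_side[of c d a b]
    by blast
qed

definition real_point :: "int \<times> int \<Rightarrow> real \<times> real" where
  "real_point = map_prod real_of_int real_of_int"

lemma inj_real_point: "inj real_point"
  by (auto simp: inj_def real_point_def)

lemma orient_real_point: "orient (real_point a) (real_point b) (real_point c) = of_int (orient a b c)"
  by (simp add: orient_def real_point_def map_prod_def split_def)

definition orientations_nonzero :: "(int \<times> int) list \<Rightarrow> bool" where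
  "orientations_nonzero ps \<longleftrightarrow>
     (\<forall>a\<in>set ps. \<forall>b\<in>set ps. \<forall>c\<in>set ps. distinct [a, b, c] \<longrightarrow> orient a b c \<noteq> 0)"

definition segment_indices :: "nat \<Rightarrow> (nat \<times> nat) list" where
  "segment_indices n = [(i, j). j \<leftarrow> [0..<n], i \<leftarrow> [0..<j]]"

definition index_segment :: "(int \<times> int) list \<Rightarrow> nat \<times> nat \<Rightarrow> (real \<times> real) set" where
  "index_segment ps e = closed_segment (real_point (ps ! fst e)) (real_point (ps ! snd e))"

fun disjoint_index :: "(int \<times> int) list \<Rightarrow> nat \<times> nat \<Rightarrow> nat \<times> nat \<Rightarrow> bool" where
  "disjoint_index ps (i, j) (k, l) \<longleftrightarrow> i \<noteq> k \<and> i \<noteq> l \<and> j \<noteq> k \<and> j \<noteq> l \<and>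
     (0 < orient (ps ! i) (ps ! j) (ps ! k) * orient (ps ! i) (ps ! j) (ps ! l) \<or>
      0 < orient (ps ! k) (ps ! l) (ps ! i) * orient (ps ! k) (ps ! l) (ps ! j))"

lemma set_segment_indices: "set (segment_indices n) = {(i, j). i < j \<and> j < n}"
  by (auto simp: segment_indices_def)

lemma length_segment_indices: "length (segment_indices n) = n choose 2"
  by (induction n) (simp_all add: segment_indices_def numeral_2_eq_2)

lemma general_position_real_points:
  assumes "orientations_nonzero ps"
  shows "general_position (real_point ` set ps)"
  unfolding general_position_def
proof (intro ballI impI)
  fix a b c assume "a \<in> real_point ` set ps" "b \<in> real_point ` set ps" "c \<in> real_point ` set ps"
    and distinct: "a \<noteq> b \<and> a \<noteq> c \<and> b \<noteq> c"
  then obtain a' b' c' where "a' \<in> set ps" "b' \<in> set ps" "c' \<in> set ps"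
    and abc: "a = real_point a'" "b = real_point b'" "c = real_point c'"
    by blast
  moreover have "distinct [a', b', c']" using distinct abc by auto
  ultimately have "orient a b c \<noteq> 0"
    using assms by (simp add: orientations_nonzero_def orient_real_point)
  then show "\<not> collinear {a, b, c}" using orient_eq_0_if_collinear by blast
qed

lemma seg_adj_index_segment_iff:
  assumes "distinct ps" "orientations_nonzero ps"
    and "e \<in> set (segment_indices (length ps))" "e' \<in> set (segment_indices (length ps))"
  shows "seg_adj (index_segment ps e) (index_segment ps e') \<longleftrightarrow> disjoint_index ps e e'"
proof -
  obtain i j k l where e: "e = (i, j)" "e' = (k, l)" and "j < length ps" "l < length ps"
    using assms(3,4) by (auto simp: set_segment_indices)
  show ?thesis
  proof (cases "i \<noteq> k \<and> i \<noteq> l \<and> j \<noteq> k \<and> j \<noteq> l")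
    case True
    have "i < length ps" "k < length ps" using assms(3,4) e by (auto simp: set_segment_indices)
    then have "distinct [ps ! i, ps ! j, ps ! k, ps ! l]"
      using True assms(1,3,4) e \<open>j < length ps\<close> \<open>l < length ps\<close>
      by (auto simp: nth_eq_iff_index_eq set_segment_indices)
    then have "orient (ps ! i) (ps ! j) (ps ! k) \<noteq> 0" "orient (ps ! i) (ps ! j) (ps ! l) \<noteq> 0"
      "orient (ps ! k) (ps ! l) (ps ! i) \<noteq> 0" "orient (ps ! k) (ps ! l) (ps ! j) \<noteq> 0"
      using assms(2) \<open>i < length ps\<close> \<open>j < length ps\<close> \<open>k < length ps\<close> \<open>l < length ps\<close>
      by (auto simp: orientations_nonzero_def)
    moreover have "0 < real_of_int x * real_of_int y \<longleftrightarrow> 0 < x * y" for x y :: int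
      by (metis of_int_0_less_iff of_int_mult)
    ultimately show ?thesis
      using True closed_segments_disjoint_iff[of "real_point (ps ! i)" "real_point (ps ! j)"
          "real_point (ps ! k)" "real_point (ps ! l)"]
      by (simp add: e seg_adj_def index_segment_def orient_real_point)
  next
    case False
    then have "index_segment ps e \<inter> index_segment ps e' \<noteq> {}"
      by (auto simp: e index_segment_def)
    then show ?thesis using False by (auto simp: e seg_adj_def)
  qed
qed

lemma inj_on_index_segment:
  assumes "distinct ps"
  shows "inj_on (index_segment ps) (set (segment_indices (length ps)))"
proof (rule inj_onI)
  fix e e' assume "e \<in> set (segment_indices (length ps))" "e' \<in> set (segment_indices (length ps))"
    and eq: "index_segment ps e = index_segment ps e'"
  then obtain i j k l where e: "e = (i, j)" "e' = (k, l)" "i < j" "j < length ps" "k < l" "l < length ps"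
    by (auto simp: set_segment_indices)
  have point_eq_iff: "real_point (ps ! n) = real_point (ps ! m) \<longleftrightarrow> n = m"
    if "n < length ps" "m < length ps" for n m
    using that assms by (simp add: inj_eq[OF inj_real_point] nth_eq_iff_index_eq)
  from eq have "{real_point (ps ! i), real_point (ps ! j)} = {real_point (ps ! k), real_point (ps ! l)}"
    by (simp add: e index_segment_def)
  then have "{i, j} = {k, l}"
    using e point_eq_iff by (auto simp: doubleton_eq_iff)
  then show "e = e'" using e by (auto simp: doubleton_eq_iff)
qed

lemma seg_vertices_real_points:
  assumes "distinct ps"
  shows "seg_vertices (real_point ` set ps) = index_segment ps ` set (segment_indices (length ps))"
proof (intro equalityI subsetI)
  fix S assume "S \<in> seg_vertices (real_point ` set ps)"
  then obtain a b where S_ab: "S = closed_segment a b" "a \<noteq> b"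
    and "a \<in> real_point ` set ps" "b \<in> real_point ` set ps"
    unfolding seg_vertices_def by blast
  then obtain i j where "a = real_point (ps ! i)" "b = real_point (ps ! j)" "i < length ps" "j < length ps"
    by (metis imageE in_set_conv_nth)
  with S_ab have S: "S = closed_segment (real_point (ps ! i)) (real_point (ps ! j))" and "i \<noteq> j"
    by auto
  then consider "i < j" | "j < i" by linarith
  then show "S \<in> index_segment ps ` set (segment_indices (length ps))"
  proof cases
    case 1
    then show ?thesis using S \<open>j < length ps\<close>
      by (auto simp: image_iff set_segment_indices index_segment_def intro!: bexI[of _ "(i, j)"])
  next
    case 2
    then show ?thesis using S \<open>i < length ps\<close>
      by (auto simp: image_iff set_segment_indices index_segment_def closed_segment_commute
          intro!: bexI[of _ "(j, i)"])
  qed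
next
  fix S assume "S \<in> index_segment ps ` set (segment_indices (length ps))"
  then obtain i j where "S = index_segment ps (i, j)" "i < j" "j < length ps"
    by (auto simp: set_segment_indices)
  moreover have "real_point (ps ! i) \<noteq> real_point (ps ! j)"
    using assms \<open>i < j\<close> \<open>j < length ps\<close> by (simp add: inj_eq[OF inj_real_point] nth_eq_iff_index_eq)
  moreover have "real_point (ps ! i) \<in> real_point ` set ps" "real_point (ps ! j) \<in> real_point ` set ps"
    using \<open>i < j\<close> \<open>j < length ps\<close> by simp_all
  ultimately show "S \<in> seg_vertices (real_point ` set ps)"
    unfolding seg_vertices_def index_segment_def by (simp only: fst_conv snd_conv) blast
qed

lemma mu_seg_vertices_real_points:
  assumes "distinct ps" "orientations_nonzero ps"
  shows "mu (seg_vertices (real_point ` set ps)) seg_adj =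
         mu (set (segment_indices (length ps))) (disjoint_index ps)"
  unfolding seg_vertices_real_points[OF assms(1)]
  by (rule mu_image[OF inj_on_index_segment[OF assms(1)]]) (simp add: seg_adj_index_segment_iff[OF assms])

definition points :: "(int \<times> int) list" where
  "points = [(121, 204), (175, 196), (216, 82), (189, 51), (44, 96), (36, 140), (127, 135)]"

lemma length_points: "length points = 7"
  by (simp add: points_def)

lemma distinct_points: "distinct points"
  by (simp add: points_def)

lemma orientations_nonzero_points: "orientations_nonzero points"
  unfolding orientations_nonzero_def points_def by code_simp

text \<open>Points are indexed from 0: the pair \<open>(i, j)\<close> is the segment from \<open>p\<^bsub>i+1\<^esub>\<close> to \<open>p\<^bsub>j+1\<^esub>\<close>.\<close>
definition visible_segments :: "(nat \<times> nat) list" where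
  "visible_segments = [(1, 2), (1, 3), (2, 3), (2, 4), (2, 5), (2, 6), (3, 4), (3, 5), (3, 6), (4, 5), (4, 6), (5, 6)]"

text \<open>Found by a computer search: a minimal subfamily of the constraints of all pairs of segments at
  distance two that still admits no hitting set with 8 elements.\<close>
definition visibility_certificate :: "(nat \<times> nat) list list" where
  "visibility_certificate =
    [[(0, 2), (0, 4), (3, 6)],
     [(0, 2), (1, 4), (3, 6)],
     [(0, 2), (2, 4), (5, 6)],
     [(0, 2), (2, 5), (3, 4)],
     [(0, 3), (0, 4), (1, 2)],
     [(0, 3), (2, 4), (5, 6)],
     [(0, 3), (1, 5), (4, 6)],
     [(0, 3), (1, 6), (4, 5)],
     [(1, 3), (1, 4), (0, 5)],
     [(1, 3), (1, 5), (4, 6)],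
     [(1, 3), (2, 5), (0, 6)],
     [(1, 3), (3, 5), (0, 6)],
     [(0, 4), (2, 4), (1, 6)],
     [(0, 4), (2, 5), (1, 6)],
     [(1, 4), (3, 5), (2, 6)],
     [(1, 4), (5, 6), (2, 3)],
     [(1, 5), (2, 5), (3, 4)],
     [(1, 5), (3, 5), (2, 6)],
     [(2, 5), (4, 6), (0, 1)],
     [(0, 6), (1, 4), (2, 3)],
     [(1, 2), (1, 4), (0, 5), (3, 6)],
     [(0, 3), (3, 6), (1, 2), (4, 5)],
     [(0, 6), (3, 6), (1, 2), (4, 5)],
     [(2, 6), (5, 6), (0, 1), (3, 4)],
     [(0, 2), (0, 5), (3, 4), (3, 6), (4, 6)],
     [(0, 2), (1, 6), (3, 4), (3, 5), (4, 5)],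
     [(1, 2), (2, 4), (0, 5), (0, 6), (5, 6)],
     [(1, 3), (3, 4), (0, 5), (0, 6), (5, 6)],
     [(1, 3), (2, 6), (0, 4), (0, 5), (4, 5)],
     [(0, 4), (3, 4), (1, 2), (1, 6), (2, 6)],
     [(0, 4), (4, 6), (1, 2), (1, 3), (2, 3)],
     [(2, 4), (3, 6), (0, 1), (0, 5), (1, 5)],
     [(0, 5), (3, 5), (1, 2), (1, 6), (2, 6)],
     [(1, 5), (1, 6), (2, 3), (2, 4), (3, 4)],
     [(3, 5), (4, 6), (0, 1), (0, 2), (1, 2)],
     [(0, 6), (2, 6), (3, 4), (3, 5), (4, 5)],
     [(0, 6), (4, 6), (1, 2), (1, 3), (2, 3)],
     [(1, 6), (3, 6), (0, 4), (0, 5), (4, 5)],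
     [(1, 6), (5, 6), (2, 3), (2, 4), (3, 4)],
     [(2, 6), (4, 6), (0, 1), (0, 5), (1, 5)],
     [(3, 6), (5, 6), (0, 1), (0, 2), (1, 2)],
     [(1, 2), (1, 6), (0, 4), (3, 4), (0, 5), (3, 5), (4, 5)],
     [(1, 2), (2, 6), (0, 4), (3, 4), (0, 5), (3, 5), (4, 5)],
     [(3, 4), (3, 6), (0, 1), (0, 2), (1, 2), (0, 5), (1, 5)],
     [(3, 4), (4, 6), (0, 1), (0, 2), (1, 2), (0, 5), (1, 5)],
     [(0, 5), (0, 6), (1, 2), (1, 3), (2, 3), (2, 4), (3, 4)],
     [(0, 5), (5, 6), (1, 2), (1, 3), (2, 3), (2, 4), (3, 4)],
     [(2, 3), (3, 4), (0, 1), (0, 5), (1, 5), (0, 6), (1, 6), (5, 6)]]"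

lemma mv_set_visible_segments:
  "mv_set (set (segment_indices 7)) (disjoint_index points) (set visible_segments)"
  by (rule mv_set_if_adjacent_or_common_neighbour)
    (simp add: visible_segments_def set_segment_indices, code_simp)

lemma visibility_certificate_valid:
  "list_all (visibility_constraint (segment_indices 7) (disjoint_index points)) visibility_certificate"
  by code_simp

lemma visibility_certificate_not_hittable: "\<not> hittable 40 8 visibility_certificate"
  by code_simp

lemma mu_segment_indices_points: "mu (set (segment_indices 7)) (disjoint_index points) = 12"
proof (rule mu_eqI)
  show "card (set visible_segments) = 12" by (simp add: visible_segments_def)
  show "card U \<le> 12" if "mv_set (set (segment_indices 7)) (disjoint_index points) U" for U
    using card_mv_set_bound[OF that visibility_certificate_valid visibility_certificate_not_hittable]
    by (simp add: length_segment_indices choose_two)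
qed (simp_all add: mv_set_visible_segments)

theorem proposition3:
  fixes P :: "(real \<times> real) set"
  assumes "P = {(121,204), (175,196), (216,82), (189,51), (44,96), (36,140), (127,135)}"
  shows "general_position P \<and> mu (seg_vertices P) seg_adj = (7 choose 2) - 9
         \<and> mu (seg_vertices P) seg_adj = 12"
proof -
  have P: "P = real_point ` set points"
    by (simp add: assms points_def real_point_def)
  have "mu (seg_vertices P) seg_adj = 12"
    using mu_seg_vertices_real_points[OF distinct_points orientations_nonzero_points]
    by (simp add: P length_points mu_segment_indices_points)
  moreover have "(7 choose 2) - 9 = (12::nat)"
    by (simp add: choose_two)
  ultimately show ?thesis
    using general_position_real_points[OF orientations_nonzero_points] P by simp
qed

end
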